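(* Let $i\in\{1,\ldots,n\}$ and suppose that for every $j\in\{1,\ldots,i\}$ the implication $$\hat F(\mathbf{1}^j,\mathbf{X}_{j+1}^n,\mathbf{1}^j,\overline{\mathbf{X}}_{j+1}^n,\mathbf{Y})\Rightarrow \hat F(\mathbf{1}^{j-1}0,\mathbf{X}_{j+1}^n,\mathbf{1}^{j-1}1,\overline{\mathbf{X}}_{j+1}^n,\mathbf{Y})\vee \hat F(\mathbf{1}^{j-1}1,\mathbf{X}_{j+1}^n,\mathbf{1}^{j-1}0,\overline{\mathbf{X}}_{j+1}^n,\mathbf{Y})$$ is valid (for all values of $\mathbf{X}_{j+1}^n,\overline{\mathbf{X}}_{j+1}^n,\mathbf{Y}$). Then $\exists\mathbf{X}_1^i\,F(\mathbf{X},\mathbf{Y})\Leftrightarrow \hat F(\mathbf{1}^i,\mathbf{X}_{i+1}^n,\mathbf{1}^i,\neg\mathbf{X}_{i+1}^n,\mathbf{Y})$.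
   Context: $\mathbf{X}=(x_1,\ldots,x_n)$ are outputs and $\mathbf{Y}=(y_1,\ldots,y_m)$ inputs; $\mathbf{X}_i^j=(x_i,\ldots,x_j)$. An NNF formula uses only $\wedge,\vee$ and negations applied to variables, represented as a DAG with $\wedge/\vee$ internal nodes and literal leaves. Given a fixed NNF DAG for $F(\mathbf{X},\mathbf{Y})$, $\hat F(\mathbf{X},\overline{\mathbf{X}},\mathbf{Y})$ is obtained by replacing each leaf $\neg x_i$ ($x_i\in\mathbf{X}$) by a fresh variable $\overline{x_i}$, $\overline{\mathbf{X}}=(\overline{x_1},\ldots,\overline{x_n})$. For bit-vectors $\mathbf{b},\mathbf{c}$ of length $j$, $\hat F(\mathbf{b},\mathbf{X}_{j+1}^n,\mathbf{c},\overline{\mathbf{X}}_{j+1}^n,\mathbf{Y})$ denotes $\hat F$ with $(x_1,\ldots,x_j):=\mathbf{b}$ and $(\overline{x_1},\ldots,\overline{x_j}):=\mathbf{c}$; writing $\neg\mathbf{X}_{j+1}^n$ in place of $\overline{\mathbf{X}}_{j+1}^n$ means $\overline{x_k}:=\neg x_k$ for $k>j$. $\mathbf{1}^{j-1}0$ is the length-$j$ vector with $j-1$ ones followed by a $0$ (similarly $\mathbf{1}^{j-1}1=\mathbf{1}^j$), and $\mathbf{1}^j$ the all-ones vector of length $j$. *)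

theory Defs
  imports Main
begin

datatype var = XV nat | YV nat

(* NNF formulas: literal leaves (polarity True = positive, False = negated),
   internal conjunction / disjunction nodes of arbitrary fan-in.
   (The DAG of the paper is unfolded into a tree; semantics coincide.) *)
datatype nnf = Lit bool var | And "nnf list" | Or "nnf list"

fun xvars :: "nnf \<Rightarrow> nat set" where
  "xvars (Lit p (XV k)) = {k}"
| "xvars (Lit p (YV k)) = {}"
| "xvars (And fs) = (\<Union>f\<in>set fs. xvars f)"
| "xvars (Or fs) = (\<Union>f\<in>set fs. xvars f)"

definition wf_nnf :: "nat \<Rightarrow> nnf \<Rightarrow> bool" where
  "wf_nnf n F \<longleftrightarrow> xvars F \<subseteq> {1..n}"

fun eval :: "(nat \<Rightarrow> bool) \<Rightarrow> (nat \<Rightarrow> bool) \<Rightarrow> nnf \<Rightarrow> bool" where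
  "eval x y (Lit p (XV k)) = (if p then x k else \<not> x k)"
| "eval x y (Lit p (YV k)) = (if p then y k else \<not> y k)"
| "eval x y (And fs) = (\<forall>f\<in>set fs. eval x y f)"
| "eval x y (Or fs) = (\<exists>f\<in>set fs. eval x y f)"

(* Semantics of \<hat>F(X, Xbar, Y): each leaf \<not>x_k is replaced by the fresh variable xbar_k *)
fun evalhat :: "(nat \<Rightarrow> bool) \<Rightarrow> (nat \<Rightarrow> bool) \<Rightarrow> (nat \<Rightarrow> bool) \<Rightarrow> nnf \<Rightarrow> bool" where
  "evalhat x xb y (Lit p (XV k)) = (if p then x k else xb k)"
| "evalhat x xb y (Lit p (YV k)) = (if p then y k else \<not> y k)"
| "evalhat x xb y (And fs) = (\<forall>f\<in>set fs. evalhat x xb y f)"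
| "evalhat x xb y (Or fs) = (\<exists>f\<in>set fs. evalhat x xb y f)"

definition ones :: "nat \<Rightarrow> (nat \<Rightarrow> bool) \<Rightarrow> nat \<Rightarrow> bool" where
  "ones j x = (\<lambda>k. if k \<le> j then True else x k)"

definition ones_zero :: "nat \<Rightarrow> (nat \<Rightarrow> bool) \<Rightarrow> nat \<Rightarrow> bool" where
  "ones_zero j x = (\<lambda>k. if k < j then True else if k = j then False else x k)"

end

theory Submission
  imports Defs
begin

text \<open>Every model of \<open>F\<close> yields a model of \<open>\<hat>F\<close> with both prefixes set to
  \<open>1\<close>, because \<open>\<hat>F\<close> is monotone in all of its \<open>X\<close>- and \<open>\<overline>X\<close>-variables. Conversely,
  starting from \<open>\<hat>F(\<one>\<^sup>i, X, \<one>\<^sup>i, \<not>X, Y)\<close>, the hypothesis for \<open>j = i, i-1, \<dots>, 1\<close> lets us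
  lower the pair \<open>(x\<^sub>j, \<overline>x\<^sub>j)\<close> from \<open>(1,1)\<close> to a consistent value \<open>(0,1)\<close> or \<open>(1,0)\<close>;
  after \<open>i\<close> steps \<open>\<overline>X = \<not>X\<close> everywhere, i.e. we hold a model of \<open>F\<close>.\<close>

definition hat_splits_at :: "nnf \<Rightarrow> nat \<Rightarrow> bool" where
  "hat_splits_at F j \<longleftrightarrow> (\<forall>x xb y.
     evalhat (ones j x) (ones j xb) y F \<longrightarrow>
       evalhat (ones_zero j x) (ones j xb) y F \<or> evalhat (ones j x) (ones_zero j xb) y F)"

lemma eval_eq_evalhat_neg: "eval x y F = evalhat x (\<lambda>k. \<not> x k) y F"
  by (induction x y F rule: eval.induct) auto

lemma evalhat_mono:
  "evalhat x xb y F \<Longrightarrow> (\<And>k. x k \<Longrightarrow> x' k) \<Longrightarrow> (\<And>k. xb k \<Longrightarrow> xb' k) \<Longrightarrow> evalhat x' xb' y F"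
  by (induction x xb y F rule: evalhat.induct) (auto split: if_splits)

lemma evalhat_cong:
  "(\<And>k. k \<in> xvars F \<Longrightarrow> x k = x' k \<and> xb k = xb' k) \<Longrightarrow> evalhat x xb y F = evalhat x' xb' y F"
  by (induction x xb y F rule: evalhat.induct) auto

lemma evalhat_ones_0:
  assumes "wf_nnf n F"
  shows "evalhat (ones 0 x) (ones 0 xb) y F = evalhat x xb y F"
proof (rule evalhat_cong)
  fix k assume "k \<in> xvars F"
  with assms have "0 < k" by (auto simp: wf_nnf_def)
  then show "ones 0 x k = x k \<and> ones 0 xb k = xb k" by (simp add: ones_def)
qed

lemma ones_zero_eq_ones_upd: "0 < j \<Longrightarrow> ones_zero j x = ones (j - 1) (x(j := False))"
  by (auto simp: ones_zero_def ones_def fun_eq_iff)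

lemma ones_eq_ones_upd: "0 < j \<Longrightarrow> ones j x = ones (j - 1) (x(j := True))"
  by (auto simp: ones_def fun_eq_iff)

text \<open>Only \<open>\<overline>x\<^sub>k = \<not>x\<^sub>k\<close> for \<open>k > j\<close> is visible through \<open>ones j\<close>, so setting \<open>x\<^sub>j := c\<close>
  keeps the complementary pattern intact one position lower.\<close>

lemma evalhat_ones_descend:
  assumes "0 < j" and "hat_splits_at F j"
    and "evalhat (ones j x) (ones j (\<lambda>k. \<not> x k)) y F"
  obtains c where "evalhat (ones (j - 1) (x(j := c))) (ones (j - 1) (\<lambda>k. \<not> (x(j := c)) k)) y F"
proof -
  have neg_upd: "(\<lambda>k. \<not> (x(j := c)) k) = (\<lambda>k. \<not> x k)(j := \<not> c)" for c
    by auto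
  from assms have "evalhat (ones_zero j x) (ones j (\<lambda>k. \<not> x k)) y F
      \<or> evalhat (ones j x) (ones_zero j (\<lambda>k. \<not> x k)) y F"
    by (auto simp: hat_splits_at_def)
  then have "\<exists>c. evalhat (ones (j - 1) (x(j := c))) (ones (j - 1) ((\<lambda>k. \<not> x k)(j := \<not> c))) y F"
  proof
    assume "evalhat (ones_zero j x) (ones j (\<lambda>k. \<not> x k)) y F"
    then show ?thesis
      using \<open>0 < j\<close> by (intro exI[of _ False]) (simp add: ones_zero_eq_ones_upd ones_eq_ones_upd[of j "\<lambda>k. \<not> x k"])
  next
    assume "evalhat (ones j x) (ones_zero j (\<lambda>k. \<not> x k)) y F"
    then show ?thesis
      using \<open>0 < j\<close> by (intro exI[of _ True]) (simp add: ones_zero_eq_ones_upd[of j "\<lambda>k. \<not> x k"] ones_eq_ones_upd[of j x])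
  qed
  then show thesis
    using that unfolding neg_upd by blast
qed

lemma evalhat_ones_descend_to:
  assumes "j \<le> i" and splits: "\<forall>j'\<in>{1..i}. hat_splits_at F j'"
    and "evalhat (ones i x) (ones i (\<lambda>k. \<not> x k)) y F"
  shows "\<exists>x'. (\<forall>k. i < k \<longrightarrow> x' k = x k) \<and> evalhat (ones j x') (ones j (\<lambda>k. \<not> x' k)) y F"
  using \<open>j \<le> i\<close>
proof (induction j rule: inc_induct)
  case base
  then show ?case using assms(3) by blast
next
  case (step j)
  then obtain x' where agree: "\<forall>k. i < k \<longrightarrow> x' k = x k"
    and hat: "evalhat (ones (Suc j) x') (ones (Suc j) (\<lambda>k. \<not> x' k)) y F"
    by blast
  from step.hyps splits have "hat_splits_at F (Suc j)" by auto
  from evalhat_ones_descend[OF _ this hat] obtain c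
    where "evalhat (ones j (x'(Suc j := c))) (ones j (\<lambda>k. \<not> (x'(Suc j := c)) k)) y F"
    by auto
  moreover have "\<forall>k. i < k \<longrightarrow> (x'(Suc j := c)) k = x k"
    using agree step.hyps by auto
  ultimately show ?case by blast
qed

theorem theorem2:
  fixes F :: nnf and n i :: nat
  assumes wf: "wf_nnf n F"
    and i: "1 \<le> i" "i \<le> n"
    and hyp: "\<forall>j\<in>{1..i}. \<forall>x xb y.
       evalhat (ones j x) (ones j xb) y F \<longrightarrow>
         evalhat (ones_zero j x) (ones j xb) y F \<or> evalhat (ones j x) (ones_zero j xb) y F"
  shows "\<forall>x y. (\<exists>x'. (\<forall>k. i < k \<longrightarrow> x' k = x k) \<and> eval x' y F) \<longleftrightarrow>
                evalhat (ones i x) (ones i (\<lambda>k. \<not> x k)) y F"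
proof (intro allI iffI)
  fix x y
  assume "\<exists>x'. (\<forall>k. i < k \<longrightarrow> x' k = x k) \<and> eval x' y F"
  then obtain x' where agree: "\<forall>k. i < k \<longrightarrow> x' k = x k" and "eval x' y F" by blast
  then have "evalhat x' (\<lambda>k. \<not> x' k) y F" by (simp add: eval_eq_evalhat_neg)
  then show "evalhat (ones i x) (ones i (\<lambda>k. \<not> x k)) y F"
    by (rule evalhat_mono) (use agree in \<open>auto simp: ones_def\<close>)
next
  fix x y
  assume "evalhat (ones i x) (ones i (\<lambda>k. \<not> x k)) y F"
  moreover have "\<forall>j\<in>{1..i}. hat_splits_at F j"
    using hyp by (simp add: hat_splits_at_def)
  ultimately show "\<exists>x'. (\<forall>k. i < k \<longrightarrow> x' k = x k) \<and> eval x' y F"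
    using evalhat_ones_descend_to[of 0 i F x y]
    by (simp add: evalhat_ones_0[OF wf] eval_eq_evalhat_neg)
qed

end
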